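(* Let $X$ be a finite set and let $\tau$ be a non-empty subset of $\binom{X}{2}$. Then $\tau$ is thin (i.e. $|L(\tau')|\ge|\tau'|+1$ for every non-empty $\tau'\subseteq\tau$) if and only if $\tau$ is total-order flexible.
   Context: $L(\tau)=\bigcup_{s\in\tau}s$. A non-empty $\tau\subseteq\binom{X}{2}$ is total-order flexible if for every choice, for each $\{x,y\}\in\tau$, of one of $x\prec y$ or $y\prec x$, there exists a total order on $X$ agreeing with all chosen relations. *)

theory Defs
  imports Main
begin

definition two_subsets :: "'a set \<Rightarrow> 'a set set" where
  "two_subsets X = {s. s \<subseteq> X \<and> card s = 2}"

definition L :: "'a set set \<Rightarrow> 'a set" where
  "L \<tau> = \<Union> \<tau>"

definition thin :: "'a set set \<Rightarrow> bool" where
  "thin \<tau> \<longleftrightarrow> (\<forall>\<tau>'. \<tau>' \<noteq> {} \<and> \<tau>' \<subseteq> \<tau> \<longrightarrow> card (L \<tau>') \<ge> card \<tau>' + 1)"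

text \<open>An orientation chooses, for each pair {x,y} in tau, an ordered pair (x,y) or (y,x),
  meaning x \<prec> y resp. y \<prec> x.\<close>
definition orientation :: "'a set set \<Rightarrow> ('a set \<Rightarrow> 'a \<times> 'a) \<Rightarrow> bool" where
  "orientation \<tau> c \<longleftrightarrow> (\<forall>s\<in>\<tau>. s = {fst (c s), snd (c s)})"

text \<open>Total-order flexible: for every orientation there is a (reflexive) linear order r
  on X such that every chosen relation x \<prec> y holds, i.e. (x,y) \<in> r with x \<noteq> y.\<close>
definition total_order_flexible :: "'a set \<Rightarrow> 'a set set \<Rightarrow> bool" where
  "total_order_flexible X \<tau> \<longleftrightarrow>
     (\<forall>c. orientation \<tau> c \<longrightarrow>
        (\<exists>r. linear_order_on X r \<and> (\<forall>s\<in>\<tau>. c s \<in> r)))"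

end

theory Submission
  imports Defs
begin

text \<open>
  View \<open>\<tau>\<close> as a graph on \<open>L \<tau>\<close>. By double counting, the degrees sum to
  \<open>2 |\<tau>|\<close>, so a thin \<open>\<tau>\<close> has a vertex of degree one; removing its edge keeps
  \<open>\<tau>\<close> thin, and the pendant vertex can then be placed at the bottom or at the top of any
  linear order realising the remaining choices.
  Conversely, if some non-empty \<open>\<sigma> \<subseteq> \<tau>\<close> has \<open>|L \<sigma>| \<le> |\<sigma>|\<close>, then
  \<open>\<sigma>\<close> contains a cycle: deleting pendant edges, deleting arbitrary edges when every
  degree is at least three, and suppressing vertices of degree two all preserve the inequality,
  until a triangle appears. Orienting a cycle cyclically leaves no compatible linear order.
\<close>

section \<open>Degrees\<close>

definition degree :: "'a set set \<Rightarrow> 'a \<Rightarrow> nat" where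
  "degree E v = card {s\<in>E. v \<in> s}"

lemma finite_L_two_subsets: "finite E \<Longrightarrow> \<forall>s\<in>E. card s = 2 \<Longrightarrow> finite (L E)"
  unfolding L_def by (metis card.infinite finite_Union zero_neq_numeral)

lemma sum_degree:
  assumes "finite E" "\<forall>s\<in>E. card s = 2"
  shows "(\<Sum>v\<in>L E. degree E v) = 2 * card E"
proof -
  have "(\<Sum>v\<in>L E. degree E v) = (\<Sum>v\<in>L E. \<Sum>s\<in>E. of_bool (v \<in> s))"
    using assms(1) unfolding degree_def by (intro sum.cong refl) (simp add: sum.If_cases Int_def)
  also have "\<dots> = (\<Sum>s\<in>E. \<Sum>v\<in>L E. of_bool (v \<in> s))"
    by (rule sum.swap)
  also have "\<dots> = (\<Sum>s\<in>E. card s)"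
  proof (rule sum.cong)
    fix s assume "s \<in> E"
    then have "L E \<inter> s = s" by (auto simp: L_def)
    then show "(\<Sum>v\<in>L E. of_bool (v \<in> s)) = card s"
      using finite_L_two_subsets[OF assms] by (simp add: of_bool_def sum.If_cases)
  qed simp
  finally show ?thesis using assms(2) by simp
qed

lemma ex_vertex_degree_le:
  assumes "finite E" "\<forall>s\<in>E. card s = 2" "2 * card E < Suc k * card (L E)"
  shows "\<exists>v\<in>L E. degree E v \<le> k"
proof (rule ccontr)
  assume "\<not> ?thesis"
  then have "(\<Sum>v\<in>L E. Suc k) \<le> (\<Sum>v\<in>L E. degree E v)"
    by (intro sum_mono) (simp add: not_le Suc_le_eq)
  then show False using assms(3) by (simp add: sum_degree[OF assms(1,2)] mult.commute)
qed

lemma unique_edge_if_degree_le_1: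
  assumes "finite E" "v \<in> L E" "degree E v \<le> 1"
  shows "\<exists>e\<in>E. v \<in> e \<and> (\<forall>s\<in>E. v \<in> s \<longrightarrow> s = e)"
proof -
  obtain e where e: "e \<in> E" "v \<in> e" using assms(2) by (auto simp: L_def)
  have "card {s\<in>E. v \<in> s} \<le> Suc 0" using assms(3) by (simp add: degree_def)
  then have "s = e" if "s \<in> E" "v \<in> s" for s
    using card_le_Suc0_iff_eq[of "{s\<in>E. v \<in> s}"] assms(1) that e by auto
  with e show ?thesis by blast
qed

lemma thin_has_leaf:
  assumes "finite \<tau>" "\<forall>s\<in>\<tau>. card s = 2" "thin \<tau>" "\<tau> \<noteq> {}"
  shows "\<exists>e\<in>\<tau>. \<exists>v\<in>e. \<forall>s\<in>\<tau>. v \<in> s \<longrightarrow> s = e"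
proof -
  have "card \<tau> + 1 \<le> card (L \<tau>)" using assms(3,4) unfolding thin_def by blast
  then obtain v where "v \<in> L \<tau>" "degree \<tau> v \<le> 1"
    using ex_vertex_degree_le[OF assms(1,2), of 1] by auto
  with unique_edge_if_degree_le_1[OF assms(1)] show ?thesis by blast
qed

section \<open>Thin edge sets are total-order flexible\<close>

lemma thin_subset: "thin \<tau> \<Longrightarrow> \<sigma> \<subseteq> \<tau> \<Longrightarrow> thin \<sigma>"
  unfolding thin_def by blast

lemma finite_two_subsets: "finite X \<Longrightarrow> finite (two_subsets X)"
  unfolding two_subsets_def by (rule finite_subset[of _ "Pow X"]) auto

lemma linear_order_on_move_to_bottom:
  assumes "linear_order_on X r" "v \<in> X"
  shows "\<exists>r'. linear_order_on X r' \<and> {v} \<times> X \<subseteq> r' \<and>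
    (\<forall>x y. x \<noteq> v \<longrightarrow> y \<noteq> v \<longrightarrow> (x, y) \<in> r \<longrightarrow> (x, y) \<in> r')"
proof (intro exI conjI)
  let ?r' = "{p\<in>r. fst p \<noteq> v \<and> snd p \<noteq> v} \<union> {v} \<times> X"
  have "r \<subseteq> X \<times> X" "trans r" "antisym r" "total_on X r" "\<forall>x\<in>X. (x, x) \<in> r"
    using assms(1) by (auto simp: linear_order_on_def partial_order_on_def preorder_on_def refl_on_def)
  then show "linear_order_on X ?r'"
    using assms(2) unfolding linear_order_on_def partial_order_on_def preorder_on_def refl_on_def
    by (auto simp: trans_def antisym_def total_on_def)
qed auto

lemma linear_order_on_move_to_top:
  assumes "linear_order_on X r" "v \<in> X"
  shows "\<exists>r'. linear_order_on X r' \<and> X \<times> {v} \<subseteq> r' \<and>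
    (\<forall>x y. x \<noteq> v \<longrightarrow> y \<noteq> v \<longrightarrow> (x, y) \<in> r \<longrightarrow> (x, y) \<in> r')"
proof -
  obtain r' where "linear_order_on X r'" "{v} \<times> X \<subseteq> r'"
    "\<forall>x y. x \<noteq> v \<longrightarrow> y \<noteq> v \<longrightarrow> (x, y) \<in> r\<inverse> \<longrightarrow> (x, y) \<in> r'"
    using linear_order_on_move_to_bottom[of X "r\<inverse>" v] assms by auto
  then show ?thesis by (intro exI[of _ "r'\<inverse>"]) auto
qed

lemma total_order_flexible_insert_pendant:
  assumes "total_order_flexible X \<tau>" "e \<subseteq> X" "v \<in> e" "\<forall>s\<in>\<tau>. v \<notin> s"
  shows "total_order_flexible X (insert e \<tau>)"
  unfolding total_order_flexible_def
proof (intro allI impI)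
  fix c assume c: "orientation (insert e \<tau>) c"
  then have "orientation \<tau> c" unfolding orientation_def by blast
  then obtain r where r: "linear_order_on X r" "\<forall>s\<in>\<tau>. c s \<in> r"
    using assms(1) unfolding total_order_flexible_def by blast
  have ce: "e = {fst (c e), snd (c e)}" using c unfolding orientation_def by blast
  have "v \<in> X" using assms(2,3) by blast
  have "c e \<in> {v} \<times> X \<or> c e \<in> X \<times> {v}"
    using ce assms(2,3) by (cases "c e") auto
  then have "\<exists>r'. linear_order_on X r' \<and> c e \<in> r' \<and>
    (\<forall>x y. x \<noteq> v \<longrightarrow> y \<noteq> v \<longrightarrow> (x, y) \<in> r \<longrightarrow> (x, y) \<in> r')"
    using linear_order_on_move_to_bottom[OF r(1) \<open>v \<in> X\<close>]
      linear_order_on_move_to_top[OF r(1) \<open>v \<in> X\<close>] by (elim disjE) (meson subsetD)+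
  then obtain r' where r': "linear_order_on X r'" "c e \<in> r'"
    and keep: "\<forall>x y. x \<noteq> v \<longrightarrow> y \<noteq> v \<longrightarrow> (x, y) \<in> r \<longrightarrow> (x, y) \<in> r'"
    by blast
  have "c s \<in> r'" if "s \<in> \<tau>" for s
  proof -
    have "s = {fst (c s), snd (c s)}" using c that unfolding orientation_def by blast
    then have "fst (c s) \<noteq> v" "snd (c s) \<noteq> v" using assms(4) that by auto
    then show ?thesis using keep r(2) that by (metis prod.collapse)
  qed
  then show "\<exists>r. linear_order_on X r \<and> (\<forall>s\<in>insert e \<tau>. c s \<in> r)" using r' by blast
qed

lemma total_order_flexible_if_thin:
  assumes "finite X" "\<tau> \<subseteq> two_subsets X" "thin \<tau>"
  shows "total_order_flexible X \<tau>"
proof -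
  have "finite \<tau>" using assms(1,2) finite_two_subsets finite_subset by blast
  then show ?thesis using assms(2,3)
  proof (induction \<tau> rule: finite_psubset_induct)
    case (psubset \<tau>)
    show ?case
    proof (cases "\<tau> = {}")
      case True
      obtain r where "well_order_on X r" using well_order_on by blast
      with True show ?thesis by (auto simp: total_order_flexible_def well_order_on_def)
    next
      case False
      have two: "\<forall>s\<in>\<tau>. card s = 2 \<and> s \<subseteq> X" using psubset.prems(1) by (auto simp: two_subsets_def)
      then obtain e v where e: "e \<in> \<tau>" "v \<in> e" and leaf: "\<forall>s\<in>\<tau>. v \<in> s \<longrightarrow> s = e"
        using thin_has_leaf[OF psubset.hyps(1) _ psubset.prems(2) False] by blast
      have "thin (\<tau> - {e})" using psubset.prems(2) by (rule thin_subset) blast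
      moreover have "\<tau> - {e} \<subset> \<tau>" "\<tau> - {e} \<subseteq> two_subsets X" using e(1) psubset.prems(1) by auto
      ultimately have "total_order_flexible X (\<tau> - {e})" using psubset.IH by blast
      then have "total_order_flexible X (insert e (\<tau> - {e}))"
        by (rule total_order_flexible_insert_pendant[where v = v]) (use e leaf two in blast)+
      then show ?thesis using e(1) by (simp add: insert_absorb)
    qed
  qed
qed

section \<open>Total-order flexible edge sets are thin\<close>

text \<open>
  The orbits of \<open>g\<close> run through cycles of \<open>E\<close> of length at least three. Orienting each
  edge \<open>{w, g w}\<close> towards \<open>w\<close> gives every vertex of \<open>W\<close> an incoming edge from \<open>W\<close>,
  so no linear order extends that orientation.
\<close>

definition cyclic_successor :: "'a set set \<Rightarrow> 'a set \<Rightarrow> ('a \<Rightarrow> 'a) \<Rightarrow> bool" where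
  "cyclic_successor E W g \<longleftrightarrow> W \<noteq> {} \<and> (\<forall>w\<in>W. g w \<in> W \<and> {w, g w} \<in> E \<and> g (g w) \<noteq> w)"

lemma cyclic_successor_subset_L: "cyclic_successor E W g \<Longrightarrow> W \<subseteq> L E"
  unfolding cyclic_successor_def L_def by blast

lemma cyclic_successor_mono: "cyclic_successor E W g \<Longrightarrow> E \<subseteq> E' \<Longrightarrow> cyclic_successor E' W g"
  unfolding cyclic_successor_def by blast

lemma cyclic_successor_triangle:
  assumes "{v, a} \<in> E" "{v, b} \<in> E" "{a, b} \<in> E" "a \<noteq> v" "b \<noteq> v" "a \<noteq> b"
  shows "cyclic_successor E {v, a, b} (\<lambda>x. if x = v then a else if x = a then b else v)"
  using assms unfolding cyclic_successor_def by (auto simp: insert_commute)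

lemma cyclic_successor_subdivide:
  assumes cyc: "cyclic_successor E' W g" and "v \<notin> W" "a \<in> W" "g a = b"
    and "{v, a} \<in> E" "{v, b} \<in> E" "\<forall>s\<in>E'. s \<noteq> {a, b} \<longrightarrow> s \<in> E"
  shows "cyclic_successor E (insert v W) (g(a := v, v := b))"
proof -
  have g: "\<And>w. w \<in> W \<Longrightarrow> g w \<in> W \<and> {w, g w} \<in> E' \<and> g (g w) \<noteq> w"
    using cyc unfolding cyclic_successor_def by blast
  have "b \<in> W" "a \<noteq> v" "b \<noteq> v" "a \<noteq> b" "g b \<in> W"
    using g[of a] g[of b] assms(2-4) by auto
  have not_ab: "{w, g w} \<noteq> {a, b}" if "w \<noteq> a" for w
  proof
    assume "{w, g w} = {a, b}"
    with that have "w = b" "g w = a" by (auto simp: doubleton_eq_iff)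
    then show False using g[of a] assms(3,4) by simp
  qed
  have other: "{w, g w} \<in> E" if "w \<in> W" "w \<noteq> a" for w
    using assms(7) g[OF that(1)] not_ab[OF that(2)] by simp
  let ?g = "g(a := v, v := b)"
  have "?g w \<in> insert v W \<and> {w, ?g w} \<in> E \<and> ?g (?g w) \<noteq> w" if w: "w \<in> insert v W" for w
  proof -
    consider "w = v" | "w = a" | "w \<in> W" "w \<noteq> a" "w \<noteq> v" using w by blast
    then show ?thesis
    proof cases
      case 1
      then show ?thesis using \<open>b \<in> W\<close> \<open>a \<noteq> b\<close> \<open>b \<noteq> v\<close> \<open>g b \<in> W\<close> assms(2,6) by auto
    next
      case 2
      then show ?thesis using \<open>a \<noteq> v\<close> \<open>a \<noteq> b\<close> assms(5) by (auto simp: insert_commute)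
    next
      case 3
      then show ?thesis using g[of w] g[of "g w"] other[of w] assms(2) by auto
    qed
  qed
  then show ?thesis unfolding cyclic_successor_def by blast
qed

lemma ex_cyclic_successor_subdivide:
  assumes cyc: "cyclic_successor E' W g" and "v \<notin> W"
    and "{v, a} \<in> E" "{v, b} \<in> E" "\<forall>s\<in>E'. s \<noteq> {a, b} \<longrightarrow> s \<in> E"
  shows "\<exists>W g. cyclic_successor E W g"
proof (cases "\<exists>w\<in>W. {w, g w} = {a, b}")
  case True
  then obtain w where "w \<in> W" "{w, g w} = {a, b}" by blast
  then have "a \<in> W \<and> g a = b \<or> b \<in> W \<and> g b = a" by (auto simp: doubleton_eq_iff)
  then show ?thesis
  proof
    assume "a \<in> W \<and> g a = b"
    then have "cyclic_successor E (insert v W) (g(a := v, v := b))"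
      using cyclic_successor_subdivide[OF cyc] assms(2-5) by simp
    then show ?thesis by blast
  next
    assume "b \<in> W \<and> g b = a"
    moreover have "\<forall>s\<in>E'. s \<noteq> {b, a} \<longrightarrow> s \<in> E" using assms(5) by (simp add: insert_commute)
    ultimately have "cyclic_successor E (insert v W) (g(b := v, v := a))"
      using cyclic_successor_subdivide[OF cyc] assms(2-4) by simp
    then show ?thesis by blast
  qed
next
  case False
  then have "cyclic_successor E W g"
    using cyc assms(5) unfolding cyclic_successor_def by simp
  then show ?thesis by blast
qed

definition overfull :: "'a set set \<Rightarrow> bool" where
  "overfull E \<longleftrightarrow> finite E \<and> (\<forall>s\<in>E. card s = 2) \<and> E \<noteq> {} \<and> card (L E) \<le> card E"

lemma two_le_card_L:
  assumes "finite E" "\<forall>s\<in>E. card s = 2" "e \<in> E"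
  shows "2 \<le> card (L E)"
proof -
  have "e \<subseteq> L E" using assms(3) by (auto simp: L_def)
  then have "card e \<le> card (L E)" using card_mono finite_L_two_subsets[OF assms(1,2)] by blast
  then show ?thesis using assms(2,3) by simp
qed

lemma overfull_Diff_edge:
  assumes "overfull E" "e \<in> E" "card (L (E - {e})) < card E"
  shows "overfull (E - {e})"
proof -
  have "E \<noteq> {e}"
  proof
    assume "E = {e}"
    then show False using assms(1,3) two_le_card_L[of "{e}" e] by (simp add: overfull_def)
  qed
  moreover have "card (E - {e}) = card E - 1" using assms(1,2) by (simp add: overfull_def)
  ultimately show ?thesis using assms unfolding overfull_def by auto
qed

lemma card_2_obtain_other:
  assumes "card s = 2" "v \<in> s"
  obtains a where "a \<noteq> v" "s = {v, a}"
proof -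
  obtain x y where "s = {x, y}" "x \<noteq> y" using card_2_iff[THEN iffD1, OF assms(1)] by blast
  then show ?thesis
  proof (cases "v = x")
    case False
    then have "v = y" using \<open>s = {x, y}\<close> assms(2) by blast
    then show ?thesis using that[of x] \<open>s = {x, y}\<close> \<open>x \<noteq> y\<close> by (simp add: insert_commute)
  qed (use that[of y] \<open>s = {x, y}\<close> \<open>x \<noteq> y\<close> in simp)
qed

lemma degree_eq_2_obtain_neighbours:
  assumes "finite E" "\<forall>s\<in>E. card s = 2" "degree E v = 2"
  obtains a b where "a \<noteq> b" "a \<noteq> v" "b \<noteq> v" "{s\<in>E. v \<in> s} = {{v, a}, {v, b}}"
proof -
  obtain e1 e2 where e: "{s\<in>E. v \<in> s} = {e1, e2}" "e1 \<noteq> e2"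
    using assms(3) card_2_iff[of "{s\<in>E. v \<in> s}"] by (auto simp: degree_def)
  then have "e1 \<in> {s\<in>E. v \<in> s}" "e2 \<in> {s\<in>E. v \<in> s}" by simp_all
  then obtain a b where "a \<noteq> v" "e1 = {v, a}" "b \<noteq> v" "e2 = {v, b}"
    using assms(2) card_2_obtain_other by (metis (no_types, lifting) mem_Collect_eq)
  moreover have "a \<noteq> b" using calculation e(2) by blast
  ultimately show ?thesis using e(1) that by simp
qed

lemma overfull_contract:
  assumes "overfull E" "{s\<in>E. v \<in> s} = {{v, a}, {v, b}}" "a \<noteq> b" "a \<noteq> v" "b \<noteq> v" "{a, b} \<notin> E"
  defines "E' \<equiv> insert {a, b} (E - {{v, a}, {v, b}})"
  shows "overfull E'" "v \<notin> L E'" "card E' < card E"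
proof -
  have fin: "finite E" and two: "\<forall>s\<in>E. card s = 2" and le: "card (L E) \<le> card E"
    using assms(1) by (simp_all add: overfull_def)
  have edges: "{v, a} \<in> E" "{v, b} \<in> E" "{v, a} \<noteq> {v, b}"
    using assms(2,3) by (auto simp: doubleton_eq_iff)
  have "v \<notin> s" if "s \<in> E" "s \<noteq> {v, a}" "s \<noteq> {v, b}" for s
    using assms(2) that by blast
  then have LE': "L E' \<subseteq> L E - {v}"
    using edges assms(4,5) unfolding E'_def L_def by auto
  then show "v \<notin> L E'" by blast
  have "v \<in> L E" using edges(1) by (auto simp: L_def)
  then have "card (L E') \<le> card (L E) - 1"
    using card_mono[OF _ LE'] finite_L_two_subsets[OF fin two] by simp
  moreover have card_E': "card E' = card E - 1"
  proof -
    have "card {{v, a}, {v, b}} \<le> card E" using edges fin by (intro card_mono) auto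
    then show ?thesis
      using edges fin assms(6) unfolding E'_def by (simp add: card_Diff_subset)
  qed
  moreover have "card {a, b} = 2" using assms(3) by simp
  ultimately show "overfull E'"
    using fin two le unfolding E'_def overfull_def by auto
  have "card E \<noteq> 0" using edges(1) fin by auto
  then show "card E' < card E" using card_E' by simp
qed

lemma overfull_Diff_pendant_edge:
  assumes "overfull E" "v \<in> L E" "degree E v \<le> 1"
  shows "\<exists>e\<in>E. overfull (E - {e})"
proof -
  have fin: "finite E" and two: "\<forall>s\<in>E. card s = 2" and le: "card (L E) \<le> card E"
    using assms(1) by (simp_all add: overfull_def)
  obtain e where e: "e \<in> E" "v \<in> e" and only: "\<forall>s\<in>E. v \<in> s \<longrightarrow> s = e"
    using unique_edge_if_degree_le_1[OF fin assms(2,3)] by blast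
  have "L (E - {e}) \<subseteq> L E - {v}" using only by (auto simp: L_def)
  also have "\<dots> \<subset> L E" using assms(2) by blast
  finally have "card (L (E - {e})) < card (L E)"
    using finite_L_two_subsets[OF fin two] by (rule psubset_card_mono[rotated])
  then show ?thesis using overfull_Diff_edge[OF assms(1) e(1)] le e(1) by auto
qed

lemma overfull_Diff_edge_if_sparse:
  assumes "overfull E" "3 * card (L E) \<le> 2 * card E" "e \<in> E"
  shows "overfull (E - {e})"
proof -
  have "2 \<le> card (L E)" using assms(1,3) two_le_card_L by (auto simp: overfull_def)
  moreover have "card (L (E - {e})) \<le> card (L E)"
    using assms(1) finite_L_two_subsets by (intro card_mono) (auto simp: overfull_def L_def)
  ultimately show ?thesis using overfull_Diff_edge[OF assms(1,3)] assms(2) by simp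
qed

lemma ex_cyclic_successor_if_overfull: "overfull E \<Longrightarrow> \<exists>W g. cyclic_successor E W g"
proof (induction "card E" arbitrary: E rule: less_induct)
  case less
  have fin: "finite E" and two: "\<forall>s\<in>E. card s = 2"
    using less.prems by (simp_all add: overfull_def)
  have delete: "\<exists>W g. cyclic_successor E W g" if "e \<in> E" "overfull (E - {e})" for e
    using less.hyps[of "E - {e}"] that fin cyclic_successor_mono[of "E - {e}" _ _ E]
    by (meson Diff_subset card_Diff1_less)
  show ?case
  proof (cases "3 * card (L E) \<le> 2 * card E")
    case True
    obtain e where "e \<in> E" using less.prems by (auto simp: overfull_def)
    then show ?thesis using delete overfull_Diff_edge_if_sparse[OF less.prems True] by blast
  next
    case False
    then obtain v where v: "v \<in> L E" "degree E v \<le> 2"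
      using ex_vertex_degree_le[OF fin two, of 2] by auto
    show ?thesis
    proof (cases "degree E v \<le> 1")
      case True
      then show ?thesis using overfull_Diff_pendant_edge[OF less.prems v(1)] delete by blast
    next
      case False
      with v(2) have "degree E v = 2" by simp
      then obtain a b where ab: "a \<noteq> b" "a \<noteq> v" "b \<noteq> v" and star: "{s\<in>E. v \<in> s} = {{v, a}, {v, b}}"
        by (rule degree_eq_2_obtain_neighbours[OF fin two])
      then have edges: "{v, a} \<in> E" "{v, b} \<in> E" by auto
      show ?thesis
      proof (cases "{a, b} \<in> E")
        case True
        then show ?thesis using cyclic_successor_triangle[OF edges True ab(2,3,1)] by blast
      next
        case False
        let ?E' = "insert {a, b} (E - {{v, a}, {v, b}})"
        obtain W g where "cyclic_successor ?E' W g"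
          using less.hyps overfull_contract(1,3)[OF less.prems star ab False] by blast
        moreover have "v \<notin> W"
          using cyclic_successor_subset_L[OF calculation] overfull_contract(2)[OF less.prems star ab False] by blast
        moreover have "\<forall>s\<in>?E'. s \<noteq> {a, b} \<longrightarrow> s \<in> E" by blast
        ultimately show ?thesis by (rule ex_cyclic_successor_subdivide[OF _ _ edges])
      qed
    qed
  qed
qed

lemma ex_orientation_along_successor:
  assumes "\<forall>s\<in>\<tau>. card s = 2" "\<forall>w\<in>W. g w \<in> W \<and> g (g w) \<noteq> w"
  shows "\<exists>c. orientation \<tau> c \<and> (\<forall>w\<in>W. c {w, g w} = (g w, w))"
proof -
  have unique: "u = w" if "u \<in> W" "w \<in> W" "{u, g u} = {w, g w}" for u w
    using that assms(2) by (auto simp: doubleton_eq_iff)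
  define P where "P s p \<longleftrightarrow> s = {fst p, snd p} \<and> (\<forall>w\<in>W. s = {w, g w} \<longrightarrow> p = (g w, w))" for s p
  have ex: "\<exists>p. P s p" if "s \<in> \<tau> \<or> (\<exists>w\<in>W. s = {w, g w})" for s
  proof (cases "\<exists>w\<in>W. s = {w, g w}")
    case True
    then obtain w where "w \<in> W" "s = {w, g w}" by blast
    then have "P s (g w, w)" using unique unfolding P_def by (auto simp: insert_commute)
    then show ?thesis by blast
  next
    case False
    with that have "card s = 2" using assms(1) by blast
    then obtain x y where "s = {x, y}" using card_2_iff[THEN iffD1] by blast
    then have "P s (x, y)" using False unfolding P_def by auto
    then show ?thesis by blast
  qed
  define c where "c s = (SOME p. P s p)" for s
  have c: "P s (c s)" if "s \<in> \<tau> \<or> (\<exists>w\<in>W. s = {w, g w})" for s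
    unfolding c_def using ex[OF that] by (rule someI_ex)
  have "orientation \<tau> c" unfolding orientation_def using c P_def by blast
  moreover have "c {w, g w} = (g w, w)" if "w \<in> W" for w using c[of "{w, g w}"] that P_def by blast
  ultimately show ?thesis by blast
qed

lemma linear_order_on_no_descending_successor:
  assumes "linear_order_on X r" "finite W" "W \<noteq> {}" "\<forall>w\<in>W. g w \<in> W \<and> g w \<noteq> w \<and> (g w, w) \<in> r"
  shows False
proof -
  let ?R = "(\<lambda>w. (g w, w)) ` W"
  have "acyclic ?R"
    by (rule acyclic_subset[OF linear_order_on_acyclic[OF assms(1)]]) (use assms(4) in auto)
  then have "wf ?R" using assms(2) by (simp add: finite_acyclic_wf)
  then obtain w where "w \<in> W" "\<forall>y. (y, w) \<in> ?R \<longrightarrow> y \<notin> W"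
    using assms(3) wf_eq_minimal[of ?R] by blast
  then show False using assms(4) by blast
qed

lemma thin_if_total_order_flexible:
  assumes "finite X" "\<tau> \<subseteq> two_subsets X" "total_order_flexible X \<tau>"
  shows "thin \<tau>"
proof (rule ccontr)
  assume "\<not> thin \<tau>"
  then obtain \<sigma> where \<sigma>: "\<sigma> \<noteq> {}" "\<sigma> \<subseteq> \<tau>" "card (L \<sigma>) \<le> card \<sigma>"
    unfolding thin_def by (auto simp: not_le less_Suc_eq_le)
  have two: "\<forall>s\<in>\<tau>. card s = 2" using assms(2) by (auto simp: two_subsets_def)
  have "finite \<sigma>"
    using finite_subset[OF \<sigma>(2) finite_subset[OF assms(2) finite_two_subsets[OF assms(1)]]] .
  then have "overfull \<sigma>" using \<sigma> two unfolding overfull_def by auto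
  then obtain W g where cyc: "cyclic_successor \<sigma> W g" using ex_cyclic_successor_if_overfull by blast
  then have succ: "\<forall>w\<in>W. g w \<in> W \<and> g (g w) \<noteq> w" and "W \<noteq> {}"
    unfolding cyclic_successor_def by auto
  obtain c where c: "orientation \<tau> c" "\<forall>w\<in>W. c {w, g w} = (g w, w)"
    using ex_orientation_along_successor[OF two succ] by blast
  obtain r where r: "linear_order_on X r" "\<forall>s\<in>\<tau>. c s \<in> r"
    using assms(3) c(1) unfolding total_order_flexible_def by blast
  have "{w, g w} \<in> \<tau>" if "w \<in> W" for w using cyc \<sigma>(2) that unfolding cyclic_successor_def by blast
  then have "\<forall>w\<in>W. g w \<in> W \<and> g w \<noteq> w \<and> (g w, w) \<in> r" using succ c(2) r(2) by metis
  moreover have "finite W"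
    using cyclic_successor_subset_L[OF cyc] finite_L_two_subsets[OF \<open>finite \<sigma>\<close>] \<sigma>(2) two
    by (meson finite_subset subset_iff)
  ultimately show False using linear_order_on_no_descending_successor[OF r(1)] \<open>W \<noteq> {}\<close> by blast
qed

theorem theorem3:
  fixes X :: "'a set" and \<tau> :: "'a set set"
  assumes "finite X" and "\<tau> \<noteq> {}" and "\<tau> \<subseteq> two_subsets X"
  shows "thin \<tau> \<longleftrightarrow> total_order_flexible X \<tau>"
  using total_order_flexible_if_thin[OF assms(1,3)] thin_if_total_order_flexible[OF assms(1,3)]
  by blast

end
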